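(* Let $(M,\mathcal A)$ be a measurable space, $m$ a probability measure on it, $\ell_1,\ell_2,\dots:M\to\mathbb R$ measurable functions, $L_0=0$, $L_t=\sum_{s=1}^t\ell_s$, and $(\beta_t)_{t\ge1}$ with $0<\beta_{t+1}\le\beta_t$ for all $t$. Assume all integrals $\int e^{-\beta_sL_t}\mathrm dm$ appearing below are finite, and define $\mathrm dm_t=e^{-\beta_tL_{t-1}}\mathrm dm/\int e^{-\beta_tL_{t-1}}\mathrm dm$. Then for all $n\ge1$, \[-\sum_{t=1}^n\frac{1}{\beta_t}\ln\Big(\int_Me^{-\beta_t\ell_t}\,\mathrm dm_t\Big)\le-\frac{1}{\beta_{n+1}}\ln\Big(\int_Me^{-\beta_{n+1}L_n}\,\mathrm dm\Big).\] *)

theory Defs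
  imports "HOL-Probability.Probability"
begin

definition cumloss :: "(nat \<Rightarrow> 'a \<Rightarrow> real) \<Rightarrow> nat \<Rightarrow> 'a \<Rightarrow> real" where
  "cumloss l t x = (\<Sum>s=1..t. l s x)"

definition gibbs :: "'a measure \<Rightarrow> (nat \<Rightarrow> real) \<Rightarrow> (nat \<Rightarrow> 'a \<Rightarrow> real) \<Rightarrow> nat \<Rightarrow> 'a measure" where
  "gibbs m \<beta> l t = density m (\<lambda>x. ennreal (exp (- \<beta> t * cumloss l (t - 1) x)
      / (\<integral>y. exp (- \<beta> t * cumloss l (t - 1) y) \<partial>m)))"

end

theory Submission
  imports Defs
begin

text \<open>
  Put Z_t(b) = \<integral> exp(-b L_t) dm and F_t(b) = ln Z_t(b) / b (\<open>scaled_log_partition\<close>).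
  The integral of exp(-\<beta>_t l_t) against the Gibbs measure m_t is Z_t(\<beta>_t) / Z_{t-1}(\<beta>_t),
  so the t-th summand on the left is F_{t-1}(\<beta>_t) - F_t(\<beta>_t). Jensen's inequality for the
  convex map y \<mapsto> y powr (b/b') shows that F_t is nondecreasing in b, hence
  F_t(\<beta>_t) \<ge> F_t(\<beta>_{t+1}), and the sum telescopes to at most
  F_0(\<beta>_1) - F_n(\<beta>_{n+1}) = -F_n(\<beta>_{n+1}).
\<close>

definition scaled_log_partition :: "'a measure \<Rightarrow> real \<Rightarrow> ('a \<Rightarrow> real) \<Rightarrow> real" where
  "scaled_log_partition m b L = (1 / b) * ln (\<integral>x. exp (- b * L x) \<partial>m)"

lemma (in prob_space) integral_exp_pos:
  fixes f :: "'a \<Rightarrow> real"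
  assumes "integrable M (\<lambda>x. exp (f x))"
  shows "0 < (\<integral>x. exp (f x) \<partial>M)"
proof -
  have "(\<integral>x. exp (f x) \<partial>M) \<noteq> 0"
  proof
    assume "(\<integral>x. exp (f x) \<partial>M) = 0"
    then have "AE x in M. exp (f x) = 0"
      using integral_nonneg_eq_0_iff_AE[OF assms] by auto
    then show False by simp
  qed
  moreover have "0 \<le> (\<integral>x. exp (f x) \<partial>M)"
    by (rule integral_nonneg_AE) auto
  ultimately show ?thesis by linarith
qed

lemma (in prob_space) scaled_log_partition_mono:
  fixes L :: "'a \<Rightarrow> real"
  assumes "0 < b'" "b' \<le> b"
    and int_b': "integrable M (\<lambda>x. exp (- b' * L x))"
    and int_b: "integrable M (\<lambda>x. exp (- b * L x))"
  shows "scaled_log_partition M b' L \<le> scaled_log_partition M b L"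
proof -
  let ?X = "\<lambda>x. exp (- b' * L x)"
  let ?q = "\<lambda>y. y powr (b / b')"
  have q_X: "?q (?X x) = exp (- b * L x)" for x
  proof -
    have "b / b' * (- (b' * L x)) = - (b * L x)" using assms(1) by (simp add: field_simps)
    then show ?thesis by (simp add: powr_def)
  qed
  have "?q (expectation ?X) \<le> expectation (\<lambda>x. ?q (?X x))"
  proof (rule jensens_inequality[where I="{0<..}"])
    show "integrable M (\<lambda>x. ?q (?X x))" unfolding q_X by (rule int_b)
  qed (use int_b' assms(1,2) in \<open>auto intro!: powr_convex\<close>)
  then have jensen: "?q (expectation ?X) \<le> (\<integral>x. exp (- b * L x) \<partial>M)"
    unfolding q_X .
  have pos_b': "0 < expectation ?X" using integral_exp_pos[OF int_b'] by simp
  have pos_b: "0 < (\<integral>x. exp (- b * L x) \<partial>M)" using integral_exp_pos[OF int_b] by simp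
  have "(b / b') * ln (expectation ?X) \<le> ln (\<integral>x. exp (- b * L x) \<partial>M)"
    using jensen pos_b' pos_b by (simp add: ln_powr flip: ln_le_cancel_iff)
  then have "(1 / b) * ((b / b') * ln (expectation ?X)) \<le> (1 / b) * ln (\<integral>x. exp (- b * L x) \<partial>M)"
    using assms(1,2) by (intro mult_left_mono) auto
  then show ?thesis using assms(1,2) by (simp add: scaled_log_partition_def)
qed

lemma cumloss_0 [simp]: "cumloss l 0 x = 0"
  by (simp add: cumloss_def)

lemma cumloss_Suc: "cumloss l (Suc t) x = cumloss l t x + l (Suc t) x"
  by (simp add: cumloss_def)

lemma borel_measurable_cumloss [measurable]:
  assumes "\<And>s. 1 \<le> s \<Longrightarrow> l s \<in> borel_measurable m"
  shows "cumloss l t \<in> borel_measurable m"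
  unfolding cumloss_def[abs_def] using assms by (intro borel_measurable_sum) auto

lemma integral_exp_loss_gibbs:
  assumes meas: "\<And>s. 1 \<le> s \<Longrightarrow> l s \<in> borel_measurable m"
  shows "(\<integral>x. exp (- \<beta> (Suc t) * l (Suc t) x) \<partial>(gibbs m \<beta> l (Suc t)))
       = (\<integral>x. exp (- \<beta> (Suc t) * cumloss l (Suc t) x) \<partial>m)
         / (\<integral>x. exp (- \<beta> (Suc t) * cumloss l t x) \<partial>m)"
    (is "_ = _ / ?Z0")
proof -
  have [measurable]: "l (Suc t) \<in> borel_measurable m" "cumloss l t \<in> borel_measurable m"
    using meas borel_measurable_cumloss[of l] by auto
  have "0 \<le> ?Z0" by (rule integral_nonneg_AE) auto
  then have "(\<integral>x. exp (- \<beta> (Suc t) * l (Suc t) x) \<partial>(gibbs m \<beta> l (Suc t)))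
      = (\<integral>x. exp (- \<beta> (Suc t) * cumloss l t x) / ?Z0 * exp (- \<beta> (Suc t) * l (Suc t) x) \<partial>m)"
    unfolding gibbs_def by (subst integral_density) auto
  also have "\<dots> = (\<integral>x. exp (- \<beta> (Suc t) * cumloss l (Suc t) x) / ?Z0 \<partial>m)"
    by (intro Bochner_Integration.integral_cong) (auto simp: cumloss_Suc exp_add[symmetric] algebra_simps)
  finally show ?thesis by simp
qed

lemma (in prob_space) gibbs_mix_loss_le:
  assumes meas: "\<And>s. 1 \<le> s \<Longrightarrow> l s \<in> borel_measurable M"
    and \<beta>: "0 < \<beta> (Suc (Suc t))" "\<beta> (Suc (Suc t)) \<le> \<beta> (Suc t)"
    and int_prev: "integrable M (\<lambda>x. exp (- \<beta> (Suc t) * cumloss l t x))"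
    and int_cur: "integrable M (\<lambda>x. exp (- \<beta> (Suc t) * cumloss l (Suc t) x))"
    and int_next: "integrable M (\<lambda>x. exp (- \<beta> (Suc (Suc t)) * cumloss l (Suc t) x))"
  shows "- (1 / \<beta> (Suc t)) * ln (\<integral>x. exp (- \<beta> (Suc t) * l (Suc t) x) \<partial>(gibbs M \<beta> l (Suc t)))
       \<le> scaled_log_partition M (\<beta> (Suc t)) (cumloss l t)
         - scaled_log_partition M (\<beta> (Suc (Suc t))) (cumloss l (Suc t))"
proof -
  define Z where "Z s = (\<integral>x. exp (- \<beta> (Suc t) * cumloss l s x) \<partial>M)" for s
  have "0 < Z t" "0 < Z (Suc t)"
    unfolding Z_def using integral_exp_pos[OF int_prev] integral_exp_pos[OF int_cur] by simp_all
  have "- (1 / \<beta> (Suc t)) * ln (\<integral>x. exp (- \<beta> (Suc t) * l (Suc t) x) \<partial>(gibbs M \<beta> l (Suc t)))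
      = - (1 / \<beta> (Suc t)) * ln (Z (Suc t) / Z t)"
    unfolding Z_def by (simp only: integral_exp_loss_gibbs[of l M \<beta> t, OF meas])
  also have "\<dots> = scaled_log_partition M (\<beta> (Suc t)) (cumloss l t)
        - scaled_log_partition M (\<beta> (Suc t)) (cumloss l (Suc t))"
    using \<open>0 < Z t\<close> \<open>0 < Z (Suc t)\<close>
    by (simp add: Z_def scaled_log_partition_def ln_div algebra_simps)
  also have "\<dots> \<le> scaled_log_partition M (\<beta> (Suc t)) (cumloss l t)
        - scaled_log_partition M (\<beta> (Suc (Suc t))) (cumloss l (Suc t))"
    using scaled_log_partition_mono[OF \<beta> int_next int_cur] by simp
  finally show ?thesis .
qed

theorem mainTheorem10:
  fixes m :: "'a measure" and l :: "nat \<Rightarrow> 'a \<Rightarrow> real" and \<beta> :: "nat \<Rightarrow> real" and n :: nat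
  assumes "prob_space m"
    and "\<And>t. t \<ge> 1 \<Longrightarrow> l t \<in> borel_measurable m"
    and "\<And>t. t \<ge> 1 \<Longrightarrow> 0 < \<beta> (Suc t) \<and> \<beta> (Suc t) \<le> \<beta> t"
    and "\<And>t. 1 \<le> t \<Longrightarrow> t \<le> n + 1 \<Longrightarrow> integrable m (\<lambda>x. exp (- \<beta> t * cumloss l (t - 1) x))"
    and "\<And>t. 1 \<le> t \<Longrightarrow> t \<le> n \<Longrightarrow> integrable m (\<lambda>x. exp (- \<beta> t * cumloss l t x))"
    and "n \<ge> 1"
  shows "- (\<Sum>t=1..n. (1 / \<beta> t) * ln (\<integral>x. exp (- \<beta> t * l t x) \<partial>(gibbs m \<beta> l t)))
         \<le> - (1 / \<beta> (n + 1)) * ln (\<integral>x. exp (- \<beta> (n + 1) * cumloss l n x) \<partial>m)"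
proof -
  interpret prob_space m by fact
  define F where "F t = scaled_log_partition m (\<beta> (Suc t)) (cumloss l t)" for t
  have "- (\<Sum>t=1..n. (1 / \<beta> t) * ln (\<integral>x. exp (- \<beta> t * l t x) \<partial>(gibbs m \<beta> l t)))
      = (\<Sum>t<n. - (1 / \<beta> (Suc t)) * ln (\<integral>x. exp (- \<beta> (Suc t) * l (Suc t) x) \<partial>(gibbs m \<beta> l (Suc t))))"
    unfolding One_nat_def sum.atLeast1_atMost_eq by (simp add: sum_negf)
  also have "\<dots> \<le> (\<Sum>t<n. F t - F (Suc t))"
  proof (rule sum_mono)
    fix t assume "t \<in> {..<n}"
    then show "- (1 / \<beta> (Suc t)) * ln (\<integral>x. exp (- \<beta> (Suc t) * l (Suc t) x) \<partial>(gibbs m \<beta> l (Suc t)))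
        \<le> F t - F (Suc t)"
      unfolding F_def using assms(3)[of "Suc t"] assms(4)[of "Suc t"] assms(4)[of "Suc (Suc t)"]
        assms(5)[of "Suc t"] by (intro gibbs_mix_loss_le assms(2)) auto
  qed
  also have "\<dots> = F 0 - F n"
    by (rule sum_lessThan_telescope')
  also have "F 0 = 0"
    by (simp add: F_def scaled_log_partition_def prob_space)
  finally show ?thesis by (simp add: F_def scaled_log_partition_def)
qed

end
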